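(* Under the standing setup below, $D_{n-1} \ge F_n$ for all $n \in \mathbb{N}_0$, and consequently, as $n \to +\infty$, \[ a_{-n} u_n + a_{-n+1} u_{n+1} = \frac{\pi}{4} + O\!\left( \Phi^{-2n} \right), \] where $\Phi = \frac{1+\sqrt5}{2}$; i.e. the rational sequence $(a_{-n}u_n + a_{-n+1}u_{n+1})_n$ converges to $\pi/4$ at least as fast as a geometric sequence of ratio $1/\Phi^2$.
   Context: Standing setup: $a_0, a_1 \in \mathbb{Z}$ and $u_0 > u_1 > 0$ are rational numbers with $a_0 \arctan u_0 + a_1 \arctan u_1 = \pi/4$. Let $\alpha := \arctan u_0 / \arctan u_1$ (which is $>1$ and irrational), with infinite simple continued fraction expansion $\alpha = [q_0; q_1, q_2, \dots]$, $q_i \in \mathbb{N}$. The numbers $u_n$ ($n \in \mathbb{N}_0$) are the positive reals with the given $u_0,u_1$ and $\arctan u_n = q_n \arctan u_{n+1} + \arctan u_{n+2}$ for all $n \in \mathbb{N}_0$. The integers $a_{-n}$ for $n \geq 1$ are defined recursively by $a_{-n-1} := q_n a_{-n} + a_{-n+1}$ for all $n \in \mathbb{N}_0$. The sequence $D_k$ ($k \ge -2$) is defined by $D_{-2}=1$, $D_{-1}=0$, $D_k = q_k D_{k-1} + D_{k-2}$ for $k \in \mathbb{N}_0$ (denominators of the convergents of $\alpha$). $(F_n)_{n\ge0}$ is the Fibonacci sequence $F_0=0$, $F_1=1$, $F_{n+2}=F_{n+1}+F_n$. *)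

theory Defs
  imports Complex_Main "HOL-Library.Landau_Symbols" "HOL-Number_Theory.Fib"
begin

fun cf_rem :: "real \<Rightarrow> nat \<Rightarrow> real" where
  "cf_rem x 0 = x"
| "cf_rem x (Suc n) = 1 / (cf_rem x n - of_int \<lfloor>cf_rem x n\<rfloor>)"

definition cf_q :: "real \<Rightarrow> nat \<Rightarrow> nat" where
  "cf_q x n = nat \<lfloor>cf_rem x n\<rfloor>"

definition alpha :: "real \<Rightarrow> real \<Rightarrow> real" where
  "alpha u0 u1 = arctan u0 / arctan u1"

text \<open>u_n: u_0, u_1 given, arctan u_n = q_n arctan u_(n+1) + arctan u_(n+2).\<close>
fun useq :: "real \<Rightarrow> real \<Rightarrow> nat \<Rightarrow> real" where
  "useq u0 u1 0 = u0"
| "useq u0 u1 (Suc 0) = u1"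
| "useq u0 u1 (Suc (Suc n)) =
     tan (arctan (useq u0 u1 n) - real (cf_q (alpha u0 u1) n) * arctan (useq u0 u1 (Suc n)))"

text \<open>aseq k = a_(1-k): aseq 0 = a_1, aseq 1 = a_0, and
  a_(-n-1) = q_n a_(-n) + a_(-n+1), i.e. aseq (n+2) = q_n aseq (n+1) + aseq n.
  Hence a_(-n) = aseq (n+1) and a_(-n+1) = aseq n.\<close>
fun aseq :: "int \<Rightarrow> int \<Rightarrow> real \<Rightarrow> real \<Rightarrow> nat \<Rightarrow> int" where
  "aseq a0 a1 u0 u1 0 = a1"
| "aseq a0 a1 u0 u1 (Suc 0) = a0"
| "aseq a0 a1 u0 u1 (Suc (Suc n)) =
     int (cf_q (alpha u0 u1) n) * aseq a0 a1 u0 u1 (Suc n) + aseq a0 a1 u0 u1 n"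

text \<open>Dseq x j = D_(j-2) for the continued fraction of x:
  D_(-2) = 1, D_(-1) = 0, D_k = q_k D_(k-1) + D_(k-2).\<close>
fun Dseq :: "real \<Rightarrow> nat \<Rightarrow> int" where
  "Dseq x 0 = 1"
| "Dseq x (Suc 0) = 0"
| "Dseq x (Suc (Suc k)) = int (cf_q x k) * Dseq x (Suc k) + Dseq x k"

end

theory Submission
  imports Defs "HOL-Analysis.Complex_Transcendental" "HOL-Decision_Procs.Approximation_Bounds"
begin

text \<open>
  Write \<open>\<theta>\<^sub>n = arctan u\<^sub>n\<close>. The defining relation of the \<open>u\<^sub>n\<close> is the Euclidean algorithm
  applied to \<open>\<theta>\<^sub>0\<close> and \<open>\<theta>\<^sub>1\<close>: one has \<open>\<theta>\<^sub>n = r\<^sub>n \<theta>\<^sub>n\<^sub>+\<^sub>1\<close> with \<open>r\<^sub>n\<close> the complete quotients of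
  \<open>\<alpha>\<close>, so the \<open>\<theta>\<^sub>n\<close> are positive and decrease. For every sequence \<open>X\<close> obeying the recurrence
  \<open>X\<^sub>j\<^sub>+\<^sub>2 = q\<^sub>j X\<^sub>j\<^sub>+\<^sub>1 + X\<^sub>j\<close> the pairing \<open>X\<^sub>n\<^sub>+\<^sub>1 \<theta>\<^sub>n + X\<^sub>n \<theta>\<^sub>n\<^sub>+\<^sub>1\<close> does not depend on \<open>n\<close>. For the
  denominators this gives \<open>D\<^sub>n\<^sub>-\<^sub>1 \<theta>\<^sub>n \<le> \<theta>\<^sub>1\<close>, and since all \<open>q\<^sub>j \<ge> 1\<close> we have \<open>D\<^sub>n\<^sub>-\<^sub>1 \<ge> F\<^sub>n\<close>, so
  \<open>\<theta>\<^sub>n = O(\<Phi>\<^sup>-\<^sup>n)\<close>. For the \<open>a\<^sub>-\<^sub>n\<close> the pairing equals \<open>\<pi>/4\<close>; applied to the sequence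
  started from \<open>|a\<^sub>0|, |a\<^sub>1|\<close>, which dominates \<open>|a\<^sub>-\<^sub>n|\<close>, it bounds \<open>|a\<^sub>-\<^sub>n| \<theta>\<^sub>n\<close> and
  \<open>|a\<^sub>-\<^sub>n\<^sub>+\<^sub>1| \<theta>\<^sub>n\<^sub>+\<^sub>1\<close> by a constant.
  Replacing \<open>\<theta>\<^sub>n\<close> by \<open>u\<^sub>n\<close> costs \<open>O(\<theta>\<^sub>n\<^sup>3)\<close> per unit of coefficient, so the total error is
  \<open>O(\<theta>\<^sub>n\<^sup>2) = O(\<Phi>\<^sup>-\<^sup>2\<^sup>n)\<close>.
\<close>

lemma self_minus_arctan_le_cube:
  fixes x :: real
  assumes "0 \<le> x"
  shows "x - arctan x \<le> x ^ 3 / 3"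
proof -
  have "(\<lambda>x. x ^ 3 / 3 - x + arctan x) 0 \<le> (\<lambda>x. x ^ 3 / 3 - x + arctan x) x"
  proof (rule DERIV_nonneg_imp_nondecreasing[OF assms])
    fix y :: real
    have "1 + y\<^sup>2 > 0"
      by (simp add: add_pos_nonneg)
    then have "3 * y\<^sup>2 / 3 - 1 + inverse (1 + y\<^sup>2) = y ^ 4 / (1 + y\<^sup>2)"
      by (simp add: field_simps power2_eq_square power4_eq_xxxx)
    moreover have "((\<lambda>x. x ^ 3 / 3 - x + arctan x) has_real_derivative
        3 * y\<^sup>2 / 3 - 1 + inverse (1 + y\<^sup>2)) (at y)"
      by (intro derivative_eq_intros DERIV_arctan refl) auto
    ultimately show "\<exists>d. ((\<lambda>x. x ^ 3 / 3 - x + arctan x) has_real_derivative d) (at y) \<and> 0 \<le> d"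
      using \<open>1 + y\<^sup>2 > 0\<close> by force
  qed
  then show ?thesis
    by simp
qed

lemma abs_self_minus_arctan_le:
  fixes x y :: real
  assumes "0 \<le> x" "x \<le> y" "0 < y"
  shows "\<bar>x - arctan x\<bar> \<le> (y / arctan y) ^ 3 / 3 * arctan x ^ 3"
proof -
  have "x * arctan y \<le> y * arctan x"
    using assms(1,2) by (rule arctan_mult_mono)
  then have x_le: "x \<le> y / arctan y * arctan x"
    using assms(3) by (simp add: field_simps)
  have "\<bar>x - arctan x\<bar> = x - arctan x"
    using arctan_le_self[OF assms(1)] by simp
  also have "\<dots> \<le> x ^ 3 / 3"
    using assms(1) by (rule self_minus_arctan_le_cube)
  also have "\<dots> \<le> (y / arctan y * arctan x) ^ 3 / 3"
    using x_le assms(1) by (simp add: power_mono)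
  finally show ?thesis
    unfolding power_mult_distrib by simp
qed

lemma cf_rem_Suc_eq_frac [simp]: "cf_rem x (Suc n) = 1 / frac (cf_rem x n)"
  by (simp add: frac_def)

declare cf_rem.simps(2) [simp del]

lemma cf_rem_minus_cf_q:
  assumes "0 \<le> cf_rem x n"
  shows "cf_rem x n - real (cf_q x n) = frac (cf_rem x n)"
  using assms by (simp add: cf_q_def frac_def)

lemma frac_gt_0_if_irrational:
  fixes x :: real
  assumes "x \<notin> \<rat>"
  shows "0 < frac x"
  using assms by (auto dest: subsetD[OF Ints_subset_Rats])

lemma cf_rem_irrational_gt_1:
  assumes "x \<notin> \<rat>" "1 < x"
  shows "cf_rem x n \<notin> \<rat> \<and> 1 < cf_rem x n"
proof (induction n)
  case 0
  then show ?case
    using assms by simp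
next
  case (Suc n)
  define r where "r = cf_rem x n"
  have "frac r \<notin> \<rat>"
  proof
    assume "frac r \<in> \<rat>"
    then have "frac r + of_int \<lfloor>r\<rfloor> \<in> \<rat>"
      by (intro Rats_add) auto
    with Suc show False
      by (simp add: r_def frac_def)
  qed
  have "0 < frac r"
    using Suc unfolding r_def by (intro frac_gt_0_if_irrational) simp
  have "1 / frac r \<notin> \<rat>"
    using \<open>frac r \<notin> \<rat>\<close> Rats_inverse[of "1 / frac r"] by auto
  moreover have "1 < 1 / frac r"
    using \<open>0 < frac r\<close> frac_lt_1[of r] by (simp add: less_divide_eq)
  ultimately show ?case
    by (simp add: r_def)
qed

lemma cf_q_ge_1:
  assumes "x \<notin> \<rat>" "1 < x"
  shows "1 \<le> cf_q x n"
  using cf_rem_irrational_gt_1[OF assms, of n] by (simp add: cf_q_def le_nat_iff le_floor_iff)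

lemma Dseq_nonneg: "0 \<le> Dseq x n"
  by (induction x n rule: Dseq.induct) auto

lemma Dseq_ge_fib:
  assumes "\<And>k. 1 \<le> cf_q x k"
  shows "int (fib n) \<le> Dseq x (Suc n)"
proof (induction n rule: fib.induct)
  case (3 n)
  have "Dseq x (Suc (Suc n)) \<le> int (cf_q x (Suc n)) * Dseq x (Suc (Suc n))"
    using assms[of "Suc n"] Dseq_nonneg[of x "Suc (Suc n)"] by (simp add: mult_le_cancel_right1)
  with 3 show ?case
    by simp
qed (use assms[of 0] in auto)

lemma abs_aseq_le_aseq_abs: "\<bar>aseq a0 a1 u0 u1 k\<bar> \<le> aseq \<bar>a0\<bar> \<bar>a1\<bar> u0 u1 k"
proof (induction k rule: fib.induct)
  case (3 k)
  let ?q = "int (cf_q (alpha u0 u1) k)"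
  have "\<bar>aseq a0 a1 u0 u1 (Suc (Suc k))\<bar> \<le> \<bar>?q * aseq a0 a1 u0 u1 (Suc k)\<bar> + \<bar>aseq a0 a1 u0 u1 k\<bar>"
    by (simp only: aseq.simps abs_triangle_ineq)
  also have "\<dots> = ?q * \<bar>aseq a0 a1 u0 u1 (Suc k)\<bar> + \<bar>aseq a0 a1 u0 u1 k\<bar>"
    by (simp add: abs_mult)
  also have "\<dots> \<le> aseq \<bar>a0\<bar> \<bar>a1\<bar> u0 u1 (Suc (Suc k))"
    using 3 by (simp add: add_mono mult_left_mono)
  finally show ?case .
qed auto

definition golden_ratio :: real where
  "golden_ratio = (1 + sqrt 5) / 2"

lemma golden_ratio_gt_1: "1 < golden_ratio"
  by (simp add: golden_ratio_def)

lemma golden_ratio_squared: "golden_ratio\<^sup>2 = golden_ratio + 1"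
  by (simp add: golden_ratio_def power2_eq_square field_simps)

lemma golden_ratio_power_le_fib: "golden_ratio ^ n \<le> golden_ratio * fib (Suc n)"
proof (induction n rule: fib.induct)
  case (3 n)
  have "golden_ratio ^ Suc (Suc n) = golden_ratio\<^sup>2 * golden_ratio ^ n"
    by (simp add: power2_eq_square)
  also have "\<dots> = golden_ratio ^ Suc n + golden_ratio ^ n"
    by (simp add: golden_ratio_squared algebra_simps)
  finally have "golden_ratio ^ Suc (Suc n) = golden_ratio ^ Suc n + golden_ratio ^ n" .
  with 3 show ?case
    by (simp add: distrib_left)
qed (use golden_ratio_gt_1 in auto)

lemma recurrence_pairing_invariant:
  fixes c t X :: "nat \<Rightarrow> 'a::comm_ring"
  assumes "\<And>j. t (Suc (Suc j)) = t j - c j * t (Suc j)"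
    and "\<And>j. X (Suc (Suc j)) = c j * X (Suc j) + X j"
  shows "X (Suc k) * t k + X k * t (Suc k) = X 1 * t 0 + X 0 * t 1"
proof (induction k)
  case (Suc k)
  have "X (Suc (Suc k)) * t (Suc k) + X (Suc k) * t (Suc (Suc k))
      = X (Suc k) * t k + X k * t (Suc k)"
    unfolding assms by (simp add: algebra_simps)
  with Suc show ?case
    by simp
qed simp

locale arctan_cf =
  fixes u0 u1 :: real
  assumes u1_pos: "0 < u1"
    and u1_less_u0: "u1 < u0"
    and alpha_irrational: "alpha u0 u1 \<notin> \<rat>"
begin

definition \<theta> :: "nat \<Rightarrow> real" where
  "\<theta> n = arctan (useq u0 u1 n)"

lemma alpha_gt_1: "1 < alpha u0 u1"
  using u1_pos u1_less_u0 by (simp add: alpha_def arctan_less_iff)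

lemmas cf_rem_alpha = cf_rem_irrational_gt_1[OF alpha_irrational alpha_gt_1]

lemma cf_q_alpha_ge_1: "1 \<le> cf_q (alpha u0 u1) n"
  using cf_q_ge_1[OF alpha_irrational alpha_gt_1] .

lemma cf_rem_alpha_minus_cf_q:
  "cf_rem (alpha u0 u1) n - real (cf_q (alpha u0 u1) n) = frac (cf_rem (alpha u0 u1) n)"
  using cf_rem_alpha[of n] by (simp add: cf_rem_minus_cf_q)

lemma Dseq_alpha_ge_fib: "int (fib n) \<le> Dseq (alpha u0 u1) (Suc n)"
  by (rule Dseq_ge_fib) (rule cf_q_alpha_ge_1)

lemma theta_Suc_Suc_eq_frac:
  assumes "0 < \<theta> (Suc n)" "\<theta> n = cf_rem (alpha u0 u1) n * \<theta> (Suc n)"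
  shows "\<theta> (Suc (Suc n)) = frac (cf_rem (alpha u0 u1) n) * \<theta> (Suc n)"
proof -
  define r where "r = cf_rem (alpha u0 u1) n"
  have "\<theta> n - real (cf_q (alpha u0 u1) n) * \<theta> (Suc n) = (r - real (cf_q (alpha u0 u1) n)) * \<theta> (Suc n)"
    using assms(2) by (simp add: r_def algebra_simps)
  also have "\<dots> = frac r * \<theta> (Suc n)"
    by (simp add: r_def cf_rem_alpha_minus_cf_q)
  finally have "\<theta> n - real (cf_q (alpha u0 u1) n) * \<theta> (Suc n) = frac r * \<theta> (Suc n)" .
  moreover have "0 \<le> frac r * \<theta> (Suc n)" "frac r * \<theta> (Suc n) < \<theta> (Suc n)"
    using assms(1) frac_lt_1[of r] by simp_all
  moreover have "\<theta> (Suc n) < pi / 2"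
    unfolding \<theta>_def by (rule arctan_ubound)
  ultimately show ?thesis
    by (simp add: \<theta>_def r_def arctan_tan)
qed

lemma theta_eq_cf_rem_mult:
  "0 < \<theta> (Suc n) \<and> \<theta> n = cf_rem (alpha u0 u1) n * \<theta> (Suc n)"
proof (induction n)
  case 0
  show ?case
    using u1_pos by (simp add: \<theta>_def alpha_def)
next
  case (Suc n)
  define r where "r = cf_rem (alpha u0 u1) n"
  have "0 < frac r"
    using cf_rem_alpha[of n] unfolding r_def by (intro frac_gt_0_if_irrational) simp
  moreover have "\<theta> (Suc (Suc n)) = frac r * \<theta> (Suc n)"
    using Suc theta_Suc_Suc_eq_frac by (simp add: r_def)
  ultimately show ?case
    using Suc unfolding cf_rem_Suc_eq_frac r_def[symmetric] by simp
qed

lemma theta_pos: "0 < \<theta> n"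
  using theta_eq_cf_rem_mult[of n] cf_rem_alpha[of n] by simp

lemma theta_Suc_less: "\<theta> (Suc n) < \<theta> n"
  using theta_eq_cf_rem_mult[of n] cf_rem_alpha[of n] by simp

lemma theta_recurrence:
  "\<theta> (Suc (Suc n)) = \<theta> n - real (cf_q (alpha u0 u1) n) * \<theta> (Suc n)"
proof -
  have "\<theta> (Suc (Suc n)) = frac (cf_rem (alpha u0 u1) n) * \<theta> (Suc n)"
    using theta_eq_cf_rem_mult[of n] by (intro theta_Suc_Suc_eq_frac) auto
  also have "\<dots> = (cf_rem (alpha u0 u1) n - real (cf_q (alpha u0 u1) n)) * \<theta> (Suc n)"
    by (simp add: cf_rem_alpha_minus_cf_q)
  also have "\<dots> = \<theta> n - real (cf_q (alpha u0 u1) n) * \<theta> (Suc n)"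
    using theta_eq_cf_rem_mult[of n] by (simp add: algebra_simps)
  finally show ?thesis .
qed

lemma useq_pos: "0 < useq u0 u1 n"
  using theta_pos[of n] by (simp add: \<theta>_def)

lemma useq_le_u0: "useq u0 u1 n \<le> u0"
proof -
  have "decseq \<theta>"
    using theta_Suc_less by (simp add: decseq_SucI less_imp_le)
  then have "\<theta> n \<le> \<theta> 0"
    by (simp add: decseqD)
  then show ?thesis
    by (simp add: \<theta>_def arctan_le_iff)
qed

lemma pairing_invariant:
  assumes "\<And>j. X (Suc (Suc j)) = real (cf_q (alpha u0 u1) j) * X (Suc j) + X j"
  shows "X (Suc k) * \<theta> k + X k * \<theta> (Suc k) = X 1 * \<theta> 0 + X 0 * \<theta> 1"
  using recurrence_pairing_invariant[where t = \<theta> and c = "\<lambda>j. real (cf_q (alpha u0 u1) j)",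
      OF theta_recurrence assms] .

lemma Dseq_mult_theta_le: "Dseq (alpha u0 u1) (Suc n) * \<theta> n \<le> \<theta> 1"
proof -
  have "Dseq (alpha u0 u1) (Suc n) * \<theta> n + Dseq (alpha u0 u1) n * \<theta> (Suc n) = \<theta> 1"
    using pairing_invariant[of "\<lambda>k. real_of_int (Dseq (alpha u0 u1) k)" n] by simp
  moreover have "0 \<le> Dseq (alpha u0 u1) n * \<theta> (Suc n)"
    using Dseq_nonneg[of "alpha u0 u1" n] theta_pos[of "Suc n"] by simp
  ultimately show ?thesis
    by linarith
qed

lemma theta_le_golden_ratio_power:
  assumes "0 < n"
  shows "\<theta> n \<le> golden_ratio\<^sup>2 * \<theta> 1 / golden_ratio ^ n"
proof -
  obtain m where n: "n = Suc m"
    using assms gr0_conv_Suc by blast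
  have "0 < golden_ratio ^ n"
    using golden_ratio_gt_1 by (intro zero_less_power) linarith
  have "golden_ratio ^ n = golden_ratio * golden_ratio ^ m"
    by (simp add: n)
  also have "\<dots> \<le> golden_ratio * (golden_ratio * fib n)"
    using golden_ratio_power_le_fib[of m] golden_ratio_gt_1 by (intro mult_left_mono) (auto simp: n)
  also have "\<dots> \<le> golden_ratio\<^sup>2 * Dseq (alpha u0 u1) (Suc n)"
    using Dseq_alpha_ge_fib[of n] golden_ratio_gt_1
    by (simp only: power2_eq_square mult.assoc) (intro mult_left_mono; simp)
  finally have "golden_ratio ^ n * \<theta> n \<le> golden_ratio\<^sup>2 * Dseq (alpha u0 u1) (Suc n) * \<theta> n"
    by (rule mult_right_mono) (use theta_pos[of n] in simp)
  also have "\<dots> \<le> golden_ratio\<^sup>2 * \<theta> 1"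
    unfolding mult.assoc by (rule mult_left_mono[OF Dseq_mult_theta_le]) simp
  finally show ?thesis
    using \<open>0 < golden_ratio ^ n\<close> by (simp add: pos_le_divide_eq mult.commute)
qed

lemma aseq_approximation_error:
  assumes "of_int a0 * arctan u0 + of_int a1 * arctan u1 = pi / 4"
  shows "\<bar>aseq a0 a1 u0 u1 (Suc n) * useq u0 u1 n + aseq a0 a1 u0 u1 n * useq u0 u1 (Suc n) - pi / 4\<bar>
    \<le> (u0 / \<theta> 0) ^ 3 / 3 * (\<bar>a0\<bar> * \<theta> 0 + \<bar>a1\<bar> * \<theta> 1) * \<theta> n ^ 2"
proof -
  define A where "A k = real_of_int (aseq a0 a1 u0 u1 k)" for k
  define B where "B k = real_of_int (aseq \<bar>a0\<bar> \<bar>a1\<bar> u0 u1 k)" for k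
  define e where "e k = useq u0 u1 k - \<theta> k" for k
  define c where "c = (u0 / \<theta> 0) ^ 3 / 3"
  have "0 < u0"
    using u1_pos u1_less_u0 by linarith
  have A_le_B: "\<bar>A k\<bar> \<le> B k" for k
    using abs_aseq_le_aseq_abs[of a0 a1 u0 u1 k]
    unfolding A_def B_def by (simp only: of_int_abs[symmetric] of_int_le_iff)
  have B_nonneg: "0 \<le> B k" for k
    using A_le_B[of k] by linarith
  have e_le: "\<bar>e k\<bar> \<le> c * \<theta> k ^ 3" for k
    using abs_self_minus_arctan_le[OF less_imp_le[OF useq_pos] useq_le_u0 \<open>0 < u0\<close>]
    by (simp add: e_def c_def \<theta>_def)
  have "0 \<le> c"
    using \<open>0 < u0\<close> theta_pos[of 0] by (simp add: c_def)
  have "\<theta> (Suc n) ^ 2 \<le> \<theta> n ^ 2"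
    using theta_Suc_less[of n] theta_pos[of "Suc n"] by (simp add: power_mono)
  then have theta_cube: "\<theta> (Suc n) ^ 3 \<le> \<theta> n ^ 2 * \<theta> (Suc n)"
    using theta_pos[of "Suc n"] by (simp add: power3_eq_cube power2_eq_square mult_right_mono)
  have "A (Suc n) * useq u0 u1 n + A n * useq u0 u1 (Suc n) - pi / 4 = A (Suc n) * e n + A n * e (Suc n)"
    using pairing_invariant[of A n] assms by (simp add: A_def e_def \<theta>_def algebra_simps)
  then have "\<bar>A (Suc n) * useq u0 u1 n + A n * useq u0 u1 (Suc n) - pi / 4\<bar>
      \<le> \<bar>A (Suc n)\<bar> * \<bar>e n\<bar> + \<bar>A n\<bar> * \<bar>e (Suc n)\<bar>"
    by (simp only: abs_triangle_ineq flip: abs_mult)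
  also have "\<dots> \<le> B (Suc n) * (c * \<theta> n ^ 3) + B n * (c * \<theta> (Suc n) ^ 3)"
    using A_le_B e_le B_nonneg by (intro add_mono mult_mono) auto
  also have "\<dots> \<le> B (Suc n) * (c * \<theta> n ^ 3) + B n * (c * (\<theta> n ^ 2 * \<theta> (Suc n)))"
    using theta_cube B_nonneg[of n] \<open>0 \<le> c\<close> by (intro add_left_mono mult_left_mono) auto
  also have "\<dots> = c * \<theta> n ^ 2 * (B (Suc n) * \<theta> n + B n * \<theta> (Suc n))"
    by (simp add: algebra_simps power3_eq_cube power2_eq_square)
  also have "\<dots> = c * (\<bar>a0\<bar> * \<theta> 0 + \<bar>a1\<bar> * \<theta> 1) * \<theta> n ^ 2"
    using pairing_invariant[of B n] by (simp add: B_def)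
  finally show ?thesis
    by (simp add: A_def c_def)
qed

lemma aseq_approximation_bigo:
  assumes "of_int a0 * arctan u0 + of_int a1 * arctan u1 = pi / 4"
  shows "(\<lambda>n. real_of_int (aseq a0 a1 u0 u1 (n + 1)) * useq u0 u1 n
      + real_of_int (aseq a0 a1 u0 u1 n) * useq u0 u1 (n + 1) - pi / 4)
    \<in> O(\<lambda>n. 1 / golden_ratio ^ (2 * n))"
proof -
  define C where "C = (u0 / \<theta> 0) ^ 3 / 3 * (\<bar>a0\<bar> * \<theta> 0 + \<bar>a1\<bar> * \<theta> 1)"
  have "0 \<le> C"
    using u1_pos u1_less_u0 theta_pos[of 0] theta_pos[of 1] by (simp add: C_def)
  have "\<bar>aseq a0 a1 u0 u1 (Suc n) * useq u0 u1 n + aseq a0 a1 u0 u1 n * useq u0 u1 (Suc n) - pi / 4\<bar>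
      \<le> C * (golden_ratio\<^sup>2 * \<theta> 1) ^ 2 * (1 / golden_ratio ^ (2 * n))" if "0 < n" for n
  proof -
    have "\<theta> n ^ 2 \<le> (golden_ratio\<^sup>2 * \<theta> 1 / golden_ratio ^ n)\<^sup>2"
      using theta_le_golden_ratio_power[OF that] theta_pos[of n] by (simp add: power_mono)
    also have "\<dots> = (golden_ratio\<^sup>2 * \<theta> 1) ^ 2 * (1 / golden_ratio ^ (2 * n))"
      by (simp add: power_divide power_mult power_mult_distrib mult.commute[of 2 n])
    finally have "\<theta> n ^ 2 \<le> (golden_ratio\<^sup>2 * \<theta> 1) ^ 2 * (1 / golden_ratio ^ (2 * n))" .
    then have "C * \<theta> n ^ 2 \<le> C * ((golden_ratio\<^sup>2 * \<theta> 1) ^ 2 * (1 / golden_ratio ^ (2 * n)))"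
      using \<open>0 \<le> C\<close> by (rule mult_left_mono)
    with aseq_approximation_error[OF assms, of n] show ?thesis
      unfolding C_def by (simp only: mult.assoc of_int_abs)
  qed
  then show ?thesis
    by (intro bigoI[where c = "C * (golden_ratio\<^sup>2 * \<theta> 1) ^ 2"])
      (auto simp: eventually_at_top_linorder intro!: exI[of _ 1])
qed

end

theorem mainTheorem9:
  fixes a0 a1 :: int and u0 u1 :: real
  assumes "u0 \<in> \<rat>" and "u1 \<in> \<rat>" and "u0 > u1" and "u1 > 0"
    and "of_int a0 * arctan u0 + of_int a1 * arctan u1 = pi / 4"
    and "alpha u0 u1 \<notin> \<rat>"
  shows "(\<forall>n. Dseq (alpha u0 u1) (n + 1) \<ge> int (fib n)) \<and>
    (\<lambda>n. real_of_int (aseq a0 a1 u0 u1 (n + 1)) * useq u0 u1 n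
         + real_of_int (aseq a0 a1 u0 u1 n) * useq u0 u1 (n + 1) - pi / 4)
      \<in> O(\<lambda>n. 1 / ((1 + sqrt 5) / 2) ^ (2 * n))"
proof -
  interpret arctan_cf u0 u1
    using assms(3,4,6) by unfold_locales
  show ?thesis
    using Dseq_alpha_ge_fib aseq_approximation_bigo[OF assms(5)]
    unfolding golden_ratio_def Suc_eq_plus1 by blast
qed

end
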